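(* Let $\mathcal{M}=(E,\mathcal{I})$ be a loopless matroid with density $\gamma(\mathcal{M})$. (i) The following algorithm is $\gamma(\mathcal{M})$-competitive in the zero information model: write the vector $\vec v\in\mathbb{R}^E$ with all coordinates equal to $1/\gamma(\mathcal{M})$ as a convex combination $\vec v=\sum_{I\in\mathcal{I}}\lambda_I\chi_I$ of incidence vectors of independent sets; select $I\in\mathcal{I}$ at random with probability $\lambda_I$; accept exactly the elements of $I$ as they arrive, without looking at weights. (ii) Let $\mathcal{M}'=(E',\mathcal{I}')$ be the simple matroid obtained from $\mathcal{M}$ by deleting all but one element in each parallel class, and let $\mathcal{A}$ be any online algorithm that is $e$-competitive in the zero information model for partition matroids in which every part has capacity one. The algorithm that first selects $I'\in\mathcal{I}'$ as in (i) applied to $\mathcal{M}'$, and then runs $\mathcal{A}$ on the partition matroid whose parts are the parallel classes of $\mathcal{M}$ represented in $I'$ (each with capacity one), discarding all other elements, is $e\,\gamma(\mathcal{M}')$-competitive.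
   Context: For a loopless matroid $\mathcal{M}=(E,\mathcal{I})$ with rank function $r$, its density is $\gamma(\mathcal{M})=\max_{\emptyset\neq X\subseteq E}|X|/r(X)$. Two elements are parallel if they form a circuit; parallel classes are the equivalence classes of this relation (together with reflexivity). Zero information model: an adversary assigns arbitrary nonnegative weights; elements are revealed in uniformly random order; the online algorithm irrevocably accepts or rejects each element on arrival, keeping the accepted set independent. An algorithm returning $\mathrm{ALG}$ is $\alpha$-competitive if $\alpha\,\mathbb{E}[w(\mathrm{ALG})]\geq w(\mathrm{OPT})$ for every weight assignment, $\mathrm{OPT}$ being a maximum-weight independent set. *)

theory Defs
  imports "HOL-Probability.Probability" "HOL-Combinatorics.Multiset_Permutations"
begin

definition matroid :: "'a set \<Rightarrow> ('a set \<Rightarrow> bool) \<Rightarrow> bool" where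
  "matroid E indep \<longleftrightarrow> finite E \<and> (\<forall>I. indep I \<longrightarrow> I \<subseteq> E) \<and> indep {} \<and>
     (\<forall>I J. indep J \<and> I \<subseteq> J \<longrightarrow> indep I) \<and>
     (\<forall>I J. indep I \<and> indep J \<and> card I < card J \<longrightarrow> (\<exists>x\<in>J - I. indep (insert x I)))"

definition rank :: "('a set \<Rightarrow> bool) \<Rightarrow> 'a set \<Rightarrow> nat" where
  "rank indep X = Max {card I | I. I \<subseteq> X \<and> indep I}"

definition loopless :: "'a set \<Rightarrow> ('a set \<Rightarrow> bool) \<Rightarrow> bool" where
  "loopless E indep \<longleftrightarrow> (\<forall>e\<in>E. indep {e})"

definition matroid_density :: "'a set \<Rightarrow> ('a set \<Rightarrow> bool) \<Rightarrow> real" where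
  "matroid_density E indep = Max {real (card X) / real (rank indep X) | X. X \<subseteq> E \<and> X \<noteq> {}}"

definition circuit :: "'a set \<Rightarrow> ('a set \<Rightarrow> bool) \<Rightarrow> 'a set \<Rightarrow> bool" where
  "circuit E indep C \<longleftrightarrow> C \<subseteq> E \<and> \<not> indep C \<and> (\<forall>x\<in>C. indep (C - {x}))"

definition parallel :: "'a set \<Rightarrow> ('a set \<Rightarrow> bool) \<Rightarrow> 'a \<Rightarrow> 'a \<Rightarrow> bool" where
  "parallel E indep e f \<longleftrightarrow> e = f \<or> circuit E indep {e, f}"

definition parallel_class :: "'a set \<Rightarrow> ('a set \<Rightarrow> bool) \<Rightarrow> 'a \<Rightarrow> 'a set" where
  "parallel_class E indep e = {f \<in> E. parallel E indep e f}"

definition simplification_set :: "'a set \<Rightarrow> ('a set \<Rightarrow> bool) \<Rightarrow> 'a set \<Rightarrow> bool" where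
  "simplification_set E indep E' \<longleftrightarrow> E' \<subseteq> E \<and> (\<forall>e\<in>E. \<exists>!f. f \<in> E' \<and> parallel E indep e f)"

definition restrict_indep :: "('a set \<Rightarrow> bool) \<Rightarrow> 'a set \<Rightarrow> 'a set \<Rightarrow> bool" where
  "restrict_indep indep E' X \<longleftrightarrow> indep X \<and> X \<subseteq> E'"

text \<open>partition matroid with parts P, every part of capacity one (ground set = union of P)\<close>
definition is_partition :: "'a set set \<Rightarrow> bool" where
  "is_partition P \<longleftrightarrow> finite P \<and> (\<forall>B\<in>P. finite B \<and> B \<noteq> {}) \<and>
     (\<forall>B\<in>P. \<forall>C\<in>P. B \<noteq> C \<longrightarrow> B \<inter> C = {})"

definition partition_indep :: "'a set set \<Rightarrow> 'a set \<Rightarrow> bool" where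
  "partition_indep P X \<longleftrightarrow> X \<subseteq> \<Union>P \<and> (\<forall>B\<in>P. card (X \<inter> B) \<le> 1)"

definition opt_weight :: "'a set \<Rightarrow> ('a set \<Rightarrow> bool) \<Rightarrow> ('a \<Rightarrow> real) \<Rightarrow> real" where
  "opt_weight E indep w = Max {sum w I | I. I \<subseteq> E \<and> indep I}"

text \<open>A randomized online algorithm: a distribution of random seeds, and a decision rule which,
  given the seed, the history of earlier arrivals (element, weight) and the current arrival
  (element, weight), irrevocably accepts (True) or rejects (False) the current element.\<close>
type_synonym ('a, 'r) online_alg = "'r pmf \<times> ('r \<Rightarrow> ('a \<times> real) list \<Rightarrow> 'a \<Rightarrow> real \<Rightarrow> bool)"

definition run :: "('a, 'r) online_alg \<Rightarrow> 'r \<Rightarrow> 'a list \<Rightarrow> ('a \<Rightarrow> real) \<Rightarrow> 'a set" where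
  "run A r \<sigma> w = {\<sigma> ! i | i. i < length \<sigma> \<and>
      snd A r (map (\<lambda>x. (x, w x)) (take i \<sigma>)) (\<sigma> ! i) (w (\<sigma> ! i))}"

definition feasible_alg :: "'a set \<Rightarrow> ('a set \<Rightarrow> bool) \<Rightarrow> ('a, 'r) online_alg \<Rightarrow> bool" where
  "feasible_alg E indep A \<longleftrightarrow> (\<forall>r \<in> set_pmf (fst A). \<forall>\<sigma> \<in> permutations_of_set E. \<forall>w.
      (\<forall>e\<in>E. 0 \<le> w e) \<longrightarrow> indep (run A r \<sigma> w))"

definition expected_alg :: "'a set \<Rightarrow> ('a, 'r) online_alg \<Rightarrow> ('a \<Rightarrow> real) \<Rightarrow> real" where
  "expected_alg E A w = measure_pmf.expectation
      (fst A \<bind> (\<lambda>r. map_pmf (\<lambda>\<sigma>. run A r \<sigma> w) (pmf_of_set (permutations_of_set E))))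
      (\<lambda>S. sum w S)"

definition competitive :: "'a set \<Rightarrow> ('a set \<Rightarrow> bool) \<Rightarrow> ('a, 'r) online_alg \<Rightarrow> real \<Rightarrow> bool" where
  "competitive E indep A \<alpha> \<longleftrightarrow> feasible_alg E indep A \<and>
     (\<forall>w. (\<forall>e\<in>E. 0 \<le> w e) \<longrightarrow> \<alpha> * expected_alg E A w \<ge> opt_weight E indep w)"

text \<open>p is a convex combination of incidence vectors of independent sets equal to the
  all-(1/gamma) vector: a distribution on independent sets with every marginal 1/gamma.\<close>
definition uniform_marginal_decomp :: "'a set \<Rightarrow> ('a set \<Rightarrow> bool) \<Rightarrow> 'a set pmf \<Rightarrow> bool" where
  "uniform_marginal_decomp E indep p \<longleftrightarrow> (\<forall>I\<in>set_pmf p. indep I) \<and>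
     (\<forall>e\<in>E. measure_pmf.prob p {I. e \<in> I} = 1 / matroid_density E indep)"

definition fixed_set_alg :: "'a set pmf \<Rightarrow> ('a, 'a set) online_alg" where
  "fixed_set_alg p = (p, (\<lambda>I h e we. e \<in> I))"

definition composite_alg :: "'a set \<Rightarrow> ('a set \<Rightarrow> bool) \<Rightarrow> 'a set pmf \<Rightarrow>
    ('a set set \<Rightarrow> ('a, 'r) online_alg) \<Rightarrow> ('a, 'a set \<times> 'r) online_alg" where
  "composite_alg E indep p' \<A> =
     (p' \<bind> (\<lambda>I'. map_pmf (\<lambda>r. (I', r)) (fst (\<A> (parallel_class E indep ` I')))),
      (\<lambda>(I', r) h e we.
         let P = parallel_class E indep ` I' in
         e \<in> \<Union>P \<and> snd (\<A> P) r (filter (\<lambda>xw. fst xw \<in> \<Union>P) h) e we))"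

end

theory Submission
  imports Defs
begin

text \<open>
  Peeling off layers of constant weight and using \<open>|S| \<le> \<gamma> r(S)\<close> on each layer gives
  \<open>w(E) \<le> \<gamma> w(I)\<close> for some independent \<open>I\<close>, for every weight \<open>w\<close>. Let \<open>y\<close> be the point of the
  convex hull of the incidence vectors of independent sets that is nearest to the constant vector
  \<open>v = 1/\<gamma>\<close>, so that \<open>\<langle>v - y, \<chi>\<^sub>J - y\<rangle> \<le> 0\<close> for every independent \<open>J\<close>. Applying the bound to
  \<open>w = v - y\<close> yields \<open>\<langle>w, v\<rangle> \<le> \<langle>w, y\<rangle>\<close>, i.e. \<open>|w|\<^sup>2 \<le> 0\<close>, so \<open>y = v\<close>. Accepting a random set
  with all marginals \<open>1/\<gamma>\<close> gains \<open>w(E)/\<gamma> \<ge> OPT/\<gamma>\<close> in expectation.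

  For an independent \<open>I'\<close> the parallel classes of its elements are pairwise disjoint,
  and any set meeting each of them at most once is independent in \<open>M\<close>, since parallel elements
  can be exchanged one at a time. Picking the heaviest element of every class is feasible in
  that partition matroid, so the expected gain is at least
  \<open>E[\<Sum>a\<in>I'. max w(class a)] / e = \<Sum>a\<in>E'. max w(class a) / (e \<gamma>')\<close>, and the sum of the
  class maxima over \<open>E'\<close> dominates \<open>OPT\<close> because distinct elements of an independent set lie in
  distinct classes.
\<close>

subsection \<open>Rank and density\<close>

lemma matroid_finite: "matroid E indep \<Longrightarrow> finite E"
  by (simp add: matroid_def)

lemma matroid_indep_carrier: "matroid E indep \<Longrightarrow> indep I \<Longrightarrow> I \<subseteq> E"
  by (simp add: matroid_def)

lemma matroid_indep_finite: "matroid E indep \<Longrightarrow> indep I \<Longrightarrow> finite I"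
  by (meson matroid_finite matroid_indep_carrier finite_subset)

lemma matroid_indep_empty: "matroid E indep \<Longrightarrow> indep {}"
  by (simp add: matroid_def)

lemma matroid_indep_subset: "matroid E indep \<Longrightarrow> indep J \<Longrightarrow> I \<subseteq> J \<Longrightarrow> indep I"
  unfolding matroid_def by blast

lemma matroid_augment:
  "matroid E indep \<Longrightarrow> indep I \<Longrightarrow> indep J \<Longrightarrow> card I < card J \<Longrightarrow> \<exists>x\<in>J - I. indep (insert x I)"
  by (simp add: matroid_def)

lemma matroid_augment_to_card:
  assumes M: "matroid E indep"
  shows "indep A \<Longrightarrow> indep B \<Longrightarrow> card A \<le> card B \<Longrightarrow>
    \<exists>S. A \<subseteq> S \<and> S \<subseteq> A \<union> B \<and> indep S \<and> card S = card B"
proof (induction "card B - card A" arbitrary: A)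
  case 0
  then show ?case by (intro exI[of _ A]) auto
next
  case (Suc n)
  then obtain x where x: "x \<in> B - A" "indep (insert x A)"
    using matroid_augment[OF M] by (metis zero_less_Suc zero_less_diff)
  have "card (insert x A) = Suc (card A)"
    using x matroid_indep_finite[OF M Suc.prems(1)] by simp
  then have "n = card B - card (insert x A)" "card (insert x A) \<le> card B"
    using Suc.hyps(2) by auto
  then obtain S where "insert x A \<subseteq> S" "S \<subseteq> insert x A \<union> B" "indep S" "card S = card B"
    using Suc.hyps(1) Suc.prems(2) x(2) by blast
  then show ?case using x by (intro exI[of _ S]) auto
qed

lemma finite_rank_values:
  "matroid E indep \<Longrightarrow> finite {card I | I. I \<subseteq> X \<and> indep I}"
  by (rule finite_subset[of _ "card ` Pow E"]) (auto dest: matroid_indep_carrier simp: matroid_finite)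

lemma card_le_rank: "matroid E indep \<Longrightarrow> I \<subseteq> X \<Longrightarrow> indep I \<Longrightarrow> card I \<le> rank indep X"
  unfolding rank_def by (intro Max_ge finite_rank_values) auto

lemma ex_indep_card_eq_rank:
  assumes "matroid E indep" obtains J where "J \<subseteq> X" "indep J" "card J = rank indep X"
proof -
  have "rank indep X \<in> {card I | I. I \<subseteq> X \<and> indep I}"
    unfolding rank_def using assms
    by (intro Max_in finite_rank_values) (auto dest: matroid_indep_empty)
  then show thesis using that by auto
qed

lemma rank_empty: "matroid E indep \<Longrightarrow> rank indep {} = 0"
  by (metis ex_indep_card_eq_rank card.empty subset_empty)

lemma indep_extend_to_rank:
  assumes M: "matroid E indep" and I: "indep I" "I \<subseteq> X"
  obtains J where "I \<subseteq> J" "J \<subseteq> X" "indep J" "card J = rank indep X"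
proof -
  obtain B where B: "B \<subseteq> X" "indep B" "card B = rank indep X"
    using ex_indep_card_eq_rank[OF M] .
  have "card I \<le> card B" using card_le_rank[OF M I(2,1)] B(3) by simp
  then obtain J where J: "I \<subseteq> J" "J \<subseteq> I \<union> B" "indep J" "card J = card B"
    using matroid_augment_to_card[OF M I(1) B(2)] by blast
  show thesis
  proof
    show "J \<subseteq> X" using J(2) I(2) B(1) by blast
  qed (use J B(3) in auto)
qed

lemma rank_ge_1:
  assumes M: "matroid E indep" and LL: "loopless E indep" and X: "X \<subseteq> E" "X \<noteq> {}"
  shows "1 \<le> rank indep X"
proof -
  obtain x where "x \<in> X" using X(2) by blast
  then have "{x} \<subseteq> X" "indep {x}" using X(1) LL by (auto simp: loopless_def)
  then have "card {x} \<le> rank indep X" by (rule card_le_rank[OF M])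
  then show ?thesis by simp
qed

lemma card_div_rank_le_density:
  assumes M: "matroid E indep" and "X \<subseteq> E" "X \<noteq> {}"
  shows "real (card X) / real (rank indep X) \<le> matroid_density E indep"
proof -
  have "{real (card X) / real (rank indep X) | X. X \<subseteq> E \<and> X \<noteq> {}}
      \<subseteq> (\<lambda>X. real (card X) / real (rank indep X)) ` Pow E"
    by blast
  then have "finite {real (card X) / real (rank indep X) | X. X \<subseteq> E \<and> X \<noteq> {}}"
    using matroid_finite[OF M] finite_subset by blast
  then show ?thesis unfolding matroid_density_def using assms(2,3) by (intro Max_ge) auto
qed

lemma card_le_density_mult_rank:
  assumes M: "matroid E indep" and LL: "loopless E indep" and "X \<subseteq> E"
  shows "real (card X) \<le> matroid_density E indep * real (rank indep X)"
proof (cases "X = {}")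
  case False
  then have "real (rank indep X) > 0" using rank_ge_1[OF M LL assms(3)] by simp
  then show ?thesis
    using card_div_rank_le_density[OF M assms(3) False] by (simp add: divide_le_eq mult.commute)
qed (simp add: rank_empty[OF M])

lemma matroid_density_pos:
  assumes M: "matroid E indep" and LL: "loopless E indep" and "E \<noteq> {}"
  shows "0 < matroid_density E indep"
proof -
  obtain x where x: "x \<in> E" using assms by blast
  have "0 < 1 / real (rank indep {x})" using rank_ge_1[OF M LL, of "{x}"] x by simp
  also have "\<dots> \<le> matroid_density E indep" using card_div_rank_le_density[OF M, of "{x}"] x by simp
  finally show ?thesis .
qed

lemma density_bound_add_layer:
  assumes M: "matroid E indep" and LL: "loopless E indep"
    and S: "S \<subseteq> E" "S \<noteq> {}" and c: "0 \<le> c" and u: "\<forall>e\<in>S. 0 \<le> u e"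
    and I': "indep I'" "I' \<subseteq> S" and bound: "sum u E \<le> matroid_density E indep * sum u I'"
  obtains I where "indep I" "I \<subseteq> S"
    "(\<Sum>e\<in>E. u e + (if e \<in> S then c else 0))
      \<le> matroid_density E indep * (\<Sum>e\<in>I. u e + (if e \<in> S then c else 0))"
proof -
  define \<gamma> where "\<gamma> = matroid_density E indep"
  have \<gamma>: "0 < \<gamma>" unfolding \<gamma>_def using matroid_density_pos[OF M LL] S by blast
  obtain I where I: "I' \<subseteq> I" "I \<subseteq> S" "indep I" "card I = rank indep S"
    using indep_extend_to_rank[OF M I'] .
  have fin: "finite E" "finite I" using matroid_finite[OF M] matroid_indep_finite[OF M I(3)] .
  have "sum u I' \<le> sum u I" using fin(2) I(1,2) u by (intro sum_mono2) auto
  have layer: "(\<Sum>e\<in>A. if e \<in> S then c else 0) = c * real (card A)" if "A \<subseteq> S" for A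
    using that by (simp add: subset_eq)
  have "(\<Sum>e\<in>E. u e + (if e \<in> S then c else 0)) = sum u E + c * real (card S)"
    using fin(1) S(1) by (simp add: sum.distrib sum.If_cases Int_absorb1)
  also have "\<dots> \<le> \<gamma> * sum u I + c * (\<gamma> * real (card I))"
  proof (rule add_mono)
    show "sum u E \<le> \<gamma> * sum u I"
      using bound \<open>sum u I' \<le> sum u I\<close> \<gamma> unfolding \<gamma>_def[symmetric]
      by (meson less_imp_le mult_left_mono order_trans)
    show "c * real (card S) \<le> c * (\<gamma> * real (card I))"
      using card_le_density_mult_rank[OF M LL S(1)] I(4) c unfolding \<gamma>_def
      by (intro mult_left_mono) auto
  qed
  also have "\<dots> = \<gamma> * (\<Sum>e\<in>I. u e + (if e \<in> S then c else 0))"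
    using layer[OF I(2)] by (simp add: sum.distrib algebra_simps)
  finally show thesis using that I(2,3) unfolding \<gamma>_def by blast
qed

lemma ex_indep_positive_sum_le_density:
  assumes M: "matroid E indep" and LL: "loopless E indep"
  shows "\<forall>e\<in>E. 0 \<le> w e \<Longrightarrow>
    \<exists>I. indep I \<and> I \<subseteq> {e\<in>E. 0 < w e} \<and> sum w E \<le> matroid_density E indep * sum w I"
proof (induction "card {e\<in>E. 0 < w e}" arbitrary: w rule: less_induct)
  case less
  define S where "S = {e\<in>E. 0 < w e}"
  have fS: "finite S" using matroid_finite[OF M] by (simp add: S_def)
  show ?case
  proof (cases "S = {}")
    case True
    then have "sum w E = 0" using less.prems by (intro sum.neutral) (force simp: S_def)
    then show ?thesis using matroid_indep_empty[OF M] by auto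
  next
    case False
    define c where "c = Min (w ` S)"
    have "c \<in> w ` S" using fS False unfolding c_def by (intro Min_in) auto
    then obtain e0 where e0: "e0 \<in> S" "w e0 = c" by auto
    have c_le: "c \<le> w e" if "e \<in> S" for e using fS that by (simp add: c_def)
    define u where "u e = w e - (if e \<in> S then c else 0)" for e
    have u_nonneg: "\<forall>e\<in>E. 0 \<le> u e" using c_le less.prems by (simp add: u_def)
    have supp_u: "{e\<in>E. 0 < u e} \<subseteq> S - {e0}" using e0 by (auto simp: u_def S_def)
    then have "card {e\<in>E. 0 < u e} \<le> card (S - {e0})" using fS by (intro card_mono) auto
    also have "\<dots> < card S" using card_Diff1_less[OF fS e0(1)] .
    finally obtain I' where I': "indep I'" "I' \<subseteq> {e\<in>E. 0 < u e}"
        "sum u E \<le> matroid_density E indep * sum u I'"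
      using less.hyps u_nonneg unfolding S_def by blast
    have "S \<subseteq> E" "0 \<le> c" "\<forall>e\<in>S. 0 \<le> u e" "I' \<subseteq> S"
      using e0 u_nonneg I'(2) supp_u by (auto simp: S_def)
    then obtain I where "indep I" "I \<subseteq> S"
      "(\<Sum>e\<in>E. u e + (if e \<in> S then c else 0))
        \<le> matroid_density E indep * (\<Sum>e\<in>I. u e + (if e \<in> S then c else 0))"
      using density_bound_add_layer[OF M LL _ False _ _ I'(1) _ I'(3)] by blast
    moreover have "(\<Sum>e\<in>A. u e + (if e \<in> S then c else 0)) = sum w A" for A
      by (simp add: u_def)
    ultimately have "indep I \<and> I \<subseteq> S \<and> sum w E \<le> matroid_density E indep * sum w I"
      by simp
    then show ?thesis unfolding S_def by blast
  qed
qed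

lemma ex_indep_sum_le_density:
  assumes "matroid E indep" "loopless E indep"
  obtains I where "indep I" "sum w E \<le> matroid_density E indep * sum w I"
proof -
  define u where "u e = max (w e) 0" for e
  obtain I where I: "indep I" "I \<subseteq> {e\<in>E. 0 < u e}" "sum u E \<le> matroid_density E indep * sum u I"
    using ex_indep_positive_sum_le_density[OF assms, of u] unfolding u_def by auto
  have "sum u I = sum w I" using I(2) unfolding u_def by (intro sum.cong) auto
  moreover have "sum w E \<le> sum u E" unfolding u_def by (intro sum_mono) auto
  ultimately show thesis using that I(1,3) by simp
qed

subsection \<open>Convex combinations of independent sets\<close>

definition weight_simplex :: "'b set \<Rightarrow> ('b \<Rightarrow> real) set" where
  "weight_simplex F = {l. (\<forall>I. 0 \<le> l I) \<and> (\<forall>I. I \<notin> F \<longrightarrow> l I = 0) \<and> sum l F = 1}"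

lemma indicator_in_weight_simplex:
  "finite F \<Longrightarrow> J \<in> F \<Longrightarrow> (\<lambda>I. if I = J then 1 else 0) \<in> weight_simplex F"
  by (auto simp: weight_simplex_def)

lemma convex_weight_simplex:
  assumes "l \<in> weight_simplex F" "m \<in> weight_simplex F" "0 \<le> t" "t \<le> 1"
  shows "(\<lambda>I. (1 - t) * l I + t * m I) \<in> weight_simplex F"
  using assms by (auto simp: weight_simplex_def sum.distrib sum_distrib_left[symmetric])

lemma compact_weight_simplex:
  assumes F: "finite F"
  shows "compact (weight_simplex F)"
proof -
  define S where "S I = (if I \<in> F then {0..1::real} else {0})" for I
  have "compactin (product_topology (\<lambda>_. euclidean) UNIV) (PiE UNIV S)"
    by (subst compactin_PiE) (auto simp: S_def)
  then have "compact (PiE UNIV S)" by (simp add: euclidean_product_topology)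
  moreover have "closed {l. sum l F = (1::real)}"
    by (intro closed_Collect_eq continuous_on_sum continuous_on_const) simp
  moreover have "weight_simplex F = PiE UNIV S \<inter> {l. sum l F = 1}"
  proof (intro equalityI subsetI)
    fix l assume l: "l \<in> weight_simplex F"
    then have "l I \<le> 1" if "I \<in> F" for I
      using member_le_sum[of I F l] F that by (auto simp: weight_simplex_def)
    then show "l \<in> PiE UNIV S \<inter> {l. sum l F = 1}"
      using l by (auto simp: S_def weight_simplex_def)
  next
    fix l assume "l \<in> PiE UNIV S \<inter> {l. sum l F = 1}"
    then show "l \<in> weight_simplex F"
      by (auto simp: weight_simplex_def S_def PiE_def Pi_def split: if_splits)
  qed
  ultimately show ?thesis by (simp add: compact_Int_closed)
qed

lemma ex_pmf_weight_simplex: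
  assumes F: "finite F" and l: "l \<in> weight_simplex F"
  obtains p where "set_pmf p \<subseteq> F" "\<And>I. pmf p I = l I"
proof -
  have nonneg: "\<And>I. 0 \<le> l I" using l by (simp add: weight_simplex_def)
  have "(\<integral>\<^sup>+I. ennreal (l I) \<partial>count_space UNIV) = (\<Sum>I\<in>F. ennreal (l I))"
    using F l by (intro nn_integral_count_space') (auto simp: weight_simplex_def)
  also have "\<dots> = 1" using l by (simp add: sum_ennreal nonneg weight_simplex_def)
  finally have total: "(\<integral>\<^sup>+I. ennreal (l I) \<partial>count_space UNIV) = 1" .
  show thesis
  proof
    show "set_pmf (embed_pmf l) \<subseteq> F"
      using set_embed_pmf[OF nonneg total] l by (auto simp: weight_simplex_def)
  qed (rule pmf_embed_pmf[OF nonneg total])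
qed

lemma prob_pmf_finite_support:
  assumes "finite F" "set_pmf p \<subseteq> F"
  shows "measure_pmf.prob p A = (\<Sum>I\<in>F. if I \<in> A then pmf p I else 0)"
proof -
  have "measure_pmf.prob p A = measure_pmf.prob p (A \<inter> set_pmf p)"
    by (simp add: measure_Int_set_pmf)
  also have "\<dots> = sum (pmf p) (A \<inter> set_pmf p)"
    using assms finite_subset by (intro measure_measure_pmf_finite) blast
  also have "\<dots> = sum (pmf p) (F \<inter> A)"
    using assms by (intro sum.mono_neutral_left) (auto simp: set_pmf_eq)
  finally show ?thesis using assms(1) by (simp add: sum.inter_restrict)
qed

lemma sum_squares_first_order:
  fixes v y z :: "'a \<Rightarrow> real"
  assumes min: "\<And>t. 0 < t \<Longrightarrow> t \<le> 1 \<Longrightarrow>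
    (\<Sum>e\<in>E. (v e - y e)\<^sup>2) \<le> (\<Sum>e\<in>E. (v e - ((1 - t) * y e + t * z e))\<^sup>2)"
  shows "(\<Sum>e\<in>E. (v e - y e) * (z e - y e)) \<le> 0"
proof (rule ccontr)
  define a where "a = (\<Sum>e\<in>E. (v e - y e) * (z e - y e))"
  define D where "D = (\<Sum>e\<in>E. (z e - y e)\<^sup>2)"
  assume "\<not> a \<le> 0"
  define t where "t = min 1 (a / (D + 1))"
  have D: "0 \<le> D" unfolding D_def by (intro sum_nonneg) auto
  have t: "0 < t" "t \<le> 1" unfolding t_def using \<open>\<not> a \<le> 0\<close> D by auto
  have "(\<Sum>e\<in>E. (v e - ((1 - t) * y e + t * z e))\<^sup>2)
      = (\<Sum>e\<in>E. (v e - y e)\<^sup>2 - 2 * t * ((v e - y e) * (z e - y e)) + t\<^sup>2 * (z e - y e)\<^sup>2)"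
    by (rule sum.cong) (simp_all add: power2_eq_square algebra_simps)
  also have "\<dots> = (\<Sum>e\<in>E. (v e - y e)\<^sup>2) - 2 * t * a + t\<^sup>2 * D"
    by (simp add: a_def D_def sum.distrib sum_subtractf sum_distrib_left)
  finally have "t * (2 * a) \<le> t * (t * D)"
    using min[OF t] by (simp add: power2_eq_square algebra_simps)
  then have "2 * a \<le> t * D" using t by simp
  also have "t * D \<le> a / (D + 1) * D" unfolding t_def using D by (intro mult_right_mono) auto
  also have "\<dots> < a" using \<open>\<not> a \<le> 0\<close> D by (simp add: field_simps)
  finally show False using \<open>\<not> a \<le> 0\<close> by simp
qed

lemma ex_nearest_convex_combination:
  fixes v :: "'a \<Rightarrow> real" and x :: "'b \<Rightarrow> 'a \<Rightarrow> real"
  assumes F: "finite F" "F \<noteq> {}"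
  obtains l where "l \<in> weight_simplex F"
    "\<And>J. J \<in> F \<Longrightarrow>
      (\<Sum>e\<in>E. (v e - (\<Sum>I\<in>F. l I * x I e)) * (x J e - (\<Sum>I\<in>F. l I * x I e))) \<le> 0"
proof -
  define comb where "comb l e = (\<Sum>I\<in>F. l I * x I e)" for l e
  define G where "G l = (\<Sum>e\<in>E. (v e - comb l e)\<^sup>2)" for l
  have "continuous_on (weight_simplex F) G" unfolding G_def comb_def
    by (intro continuous_intros continuous_on_subset[OF continuous_on_product_coordinates]) auto
  moreover have "weight_simplex F \<noteq> {}"
    using F indicator_in_weight_simplex[OF F(1)] by blast
  ultimately obtain l0 where l0: "l0 \<in> weight_simplex F" "\<And>l. l \<in> weight_simplex F \<Longrightarrow> G l0 \<le> G l"
    using continuous_attains_inf[OF compact_weight_simplex[OF F(1)]] by metis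
  have "(\<Sum>e\<in>E. (v e - comb l0 e) * (x J e - comb l0 e)) \<le> 0" if J: "J \<in> F" for J
  proof (rule sum_squares_first_order)
    fix t :: real assume t: "0 < t" "t \<le> 1"
    define l where "l I = (1 - t) * l0 I + t * (if I = J then 1 else 0)" for I
    have "l \<in> weight_simplex F"
      using convex_weight_simplex[OF l0(1) indicator_in_weight_simplex[OF F(1) J], of t] t
      unfolding l_def by simp
    then have "G l0 \<le> G l" by (rule l0(2))
    moreover have "comb l e = (1 - t) * comb l0 e + t * x J e" for e
    proof -
      have "comb l e = (\<Sum>I\<in>F. (1 - t) * (l0 I * x I e) + t * (if I = J then x J e else 0))"
        unfolding comb_def l_def by (rule sum.cong) (auto simp: algebra_simps)
      also have "\<dots> = (1 - t) * comb l0 e + t * x J e"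
        using F(1) J by (simp add: comb_def sum.distrib sum_distrib_left[symmetric])
      finally show ?thesis .
    qed
    ultimately show "(\<Sum>e\<in>E. (v e - comb l0 e)\<^sup>2) \<le> (\<Sum>e\<in>E. (v e - ((1 - t) * comb l0 e + t * x J e))\<^sup>2)"
      unfolding G_def by simp
  qed
  then show thesis using that l0(1) unfolding comb_def by blast
qed

lemma uniform_marginal_decomp_exists:
  assumes M: "matroid E indep" and LL: "loopless E indep"
  shows "\<exists>p. uniform_marginal_decomp E indep p"
proof (cases "E = {}")
  case True
  then show ?thesis using matroid_indep_empty[OF M]
    by (intro exI[of _ "return_pmf {}"]) (simp add: uniform_marginal_decomp_def)
next
  case False
  define \<gamma> where "\<gamma> = matroid_density E indep"
  have \<gamma>: "0 < \<gamma>" unfolding \<gamma>_def using matroid_density_pos[OF M LL False] .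
  define F where "F = Collect indep"
  have fE: "finite E" using matroid_finite[OF M] .
  have F_Pow: "F \<subseteq> Pow E" unfolding F_def using matroid_indep_carrier[OF M] by blast
  have F: "finite F" "F \<noteq> {}"
    using finite_subset[OF F_Pow] fE matroid_indep_empty[OF M] by (auto simp: F_def)
  define v :: "'a \<Rightarrow> real" where "v e = 1 / \<gamma>" for e
  obtain l where l: "l \<in> weight_simplex F" and obtuse: "\<And>J. J \<in> F \<Longrightarrow>
      (\<Sum>e\<in>E. (v e - (\<Sum>I\<in>F. l I * indicator I e)) * (indicator J e - (\<Sum>I\<in>F. l I * indicator I e))) \<le> 0"
    using ex_nearest_convex_combination[OF F] by blast
  define y where "y e = (\<Sum>I\<in>F. l I * indicator I e)" for e
  define w where "w e = v e - y e" for e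
  obtain J where J: "indep J" "sum w E \<le> \<gamma> * sum w J"
    using ex_indep_sum_le_density[OF M LL] unfolding \<gamma>_def by blast
  have "sum w J = (\<Sum>e\<in>E. w e * indicator J e)"
    using matroid_indep_carrier[OF M J(1)] fE
    by (simp add: indicator_def sum.If_cases Int_absorb1 flip: of_bool_def)
  also have "\<dots> \<le> (\<Sum>e\<in>E. w e * y e)"
  proof -
    have "(\<Sum>e\<in>E. w e * (indicator J e - y e)) \<le> 0"
      unfolding w_def y_def using obtuse[of J] J(1) by (simp add: F_def)
    then show ?thesis by (simp add: right_diff_distrib sum_subtractf)
  qed
  finally have "sum w E \<le> \<gamma> * (\<Sum>e\<in>E. w e * y e)"
    using J(2) \<gamma> by (meson less_imp_le mult_left_mono order_trans)
  then have "(\<Sum>e\<in>E. w e * v e) \<le> (\<Sum>e\<in>E. w e * y e)"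
    using \<gamma> by (simp add: v_def pos_divide_le_eq mult.commute flip: sum_divide_distrib)
  then have "(\<Sum>e\<in>E. (w e)\<^sup>2) \<le> 0"
    by (simp add: w_def power2_eq_square right_diff_distrib sum_subtractf)
  then have "\<forall>e\<in>E. (w e)\<^sup>2 = 0"
    using sum_nonneg_eq_0_iff[OF fE, of "\<lambda>e. (w e)\<^sup>2"] by (simp add: order_antisym sum_nonneg)
  then have y_eq_v: "\<forall>e\<in>E. y e = 1 / \<gamma>" by (simp add: w_def v_def)
  obtain p where p: "set_pmf p \<subseteq> F" "\<And>I. pmf p I = l I"
    using ex_pmf_weight_simplex[OF F(1) l] by blast
  have "measure_pmf.prob p {I. e \<in> I} = y e" for e
    unfolding prob_pmf_finite_support[OF F(1) p(1)] y_def p(2) by (intro sum.cong) auto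
  then show ?thesis using p(1) y_eq_v
    unfolding uniform_marginal_decomp_def F_def \<gamma>_def by auto
qed

subsection \<open>Online algorithms\<close>

lemma run_subset: "run A r \<sigma> w \<subseteq> set \<sigma>"
  unfolding run_def by auto

lemma expectation_cong_pmf:
  fixes f g :: "'b \<Rightarrow> real"
  assumes "\<And>x. x \<in> set_pmf q \<Longrightarrow> f x = g x"
  shows "measure_pmf.expectation q f = measure_pmf.expectation q g"
  by (rule integral_cong_AE) (auto simp: AE_measure_pmf_iff assms)

lemma expectation_mono_pmf:
  fixes f g :: "'b \<Rightarrow> real"
  assumes "finite (set_pmf q)" "\<And>x. x \<in> set_pmf q \<Longrightarrow> f x \<le> g x"
  shows "measure_pmf.expectation q f \<le> measure_pmf.expectation q g"
  using assms by (intro integral_mono_AE integrable_measure_pmf_finite) (auto simp: AE_measure_pmf_iff)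

lemma expectation_bind_pmf_bounded:
  fixes f :: "'b \<Rightarrow> real"
  assumes "\<And>x. \<bar>f x\<bar> \<le> B"
  shows "measure_pmf.expectation (p \<bind> N) f = measure_pmf.expectation p (\<lambda>x. measure_pmf.expectation (N x) f)"
  unfolding measure_pmf_bind
  by (rule integral_bind[where K="count_space UNIV" and B=B and B'=1])
     (auto simp: assms measure_pmf.emeasure_space_1 measure_pmf_in_subprob_algebra
       intro: measure_pmf.finite_measure_axioms)

lemma expectation_sum_random_set:
  fixes w :: "'a \<Rightarrow> real"
  assumes "finite E"
  shows "measure_pmf.expectation q (\<lambda>I. sum w (I \<inter> E)) = (\<Sum>e\<in>E. w e * measure_pmf.prob q {I. e \<in> I})"
proof -
  have "sum w (I \<inter> E) = (\<Sum>e\<in>E. w e * indicator {I. e \<in> I} I)" for I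
    using assms by (simp add: indicator_def Int_commute sum.inter_restrict)
  then have "measure_pmf.expectation q (\<lambda>I. sum w (I \<inter> E))
      = (\<Sum>e\<in>E. measure_pmf.expectation q (\<lambda>I. w e * indicator {I. e \<in> I} I))"
    by (simp add: Bochner_Integration.integral_sum integrable_real_indicator
        measure_pmf.emeasure_finite less_top[symmetric])
  then show ?thesis by simp
qed

definition outcome_pmf :: "'a set \<Rightarrow> ('a, 'r) online_alg \<Rightarrow> ('a \<Rightarrow> real) \<Rightarrow> 'a set pmf" where
  "outcome_pmf E A w =
     fst A \<bind> (\<lambda>r. map_pmf (\<lambda>\<sigma>. run A r \<sigma> w) (pmf_of_set (permutations_of_set E)))"

lemma expected_alg_outcome_pmf: "expected_alg E A w = measure_pmf.expectation (outcome_pmf E A w) (sum w)"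
  by (simp add: expected_alg_def outcome_pmf_def)

lemma set_pmf_outcome_pmf_subset:
  assumes "finite E" "S \<in> set_pmf (outcome_pmf E A w)"
  shows "S \<subseteq> E"
  using assms run_subset[of A _ _ w]
  by (auto simp: outcome_pmf_def permutations_of_set_nonempty dest: permutations_of_setD(1))

lemma expected_alg_empty: "expected_alg {} A w = 0"
proof -
  have "expected_alg {} A w = measure_pmf.expectation (outcome_pmf {} A w) (\<lambda>_. 0)"
    unfolding expected_alg_outcome_pmf
  proof (rule expectation_cong_pmf)
    fix S assume "S \<in> set_pmf (outcome_pmf {} A w)"
    then have "S = {}" using set_pmf_outcome_pmf_subset[OF finite.emptyI] by blast
    then show "sum w S = 0" by simp
  qed
  then show ?thesis by simp
qed

lemma feasible_algD:
  "feasible_alg E indep A \<Longrightarrow> r \<in> set_pmf (fst A) \<Longrightarrow> \<sigma> \<in> permutations_of_set E \<Longrightarrow>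
    \<forall>e\<in>E. 0 \<le> w e \<Longrightarrow> indep (run A r \<sigma> w)"
  by (simp add: feasible_alg_def)

lemma competitiveD:
  "competitive E indep A \<alpha> \<Longrightarrow> \<forall>e\<in>E. 0 \<le> w e \<Longrightarrow> opt_weight E indep w \<le> \<alpha> * expected_alg E A w"
  by (simp add: competitive_def)

lemma finite_opt_weight_values: "finite E \<Longrightarrow> finite {sum w I | I. I \<subseteq> E \<and> indep I}"
  by (rule finite_subset[of _ "sum w ` Pow E"]) auto

lemma sum_le_opt_weight:
  "finite E \<Longrightarrow> I \<subseteq> E \<Longrightarrow> indep I \<Longrightarrow> sum w I \<le> opt_weight E indep w"
  unfolding opt_weight_def by (intro Max_ge finite_opt_weight_values) auto

lemma opt_weight_le_sum:
  assumes M: "matroid E indep" and nonneg: "\<forall>e\<in>E. 0 \<le> w e"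
  shows "opt_weight E indep w \<le> sum w E"
  unfolding opt_weight_def
proof (rule Max.boundedI)
  show "finite {sum w I | I. I \<subseteq> E \<and> indep I}"
    by (rule finite_opt_weight_values[OF matroid_finite[OF M]])
  show "{sum w I | I. I \<subseteq> E \<and> indep I} \<noteq> {}" using matroid_indep_empty[OF M] by blast
  show "\<And>x. x \<in> {sum w I | I. I \<subseteq> E \<and> indep I} \<Longrightarrow> x \<le> sum w E"
    using nonneg matroid_finite[OF M] by (auto intro!: sum_mono2)
qed

subsection \<open>The fixed-set algorithm\<close>

lemma run_fixed_set_alg: "run (fixed_set_alg p) I \<sigma> w = I \<inter> set \<sigma>"
  unfolding run_def fixed_set_alg_def by (auto simp: in_set_conv_nth)

lemma expected_alg_fixed_set_alg:
  assumes fE: "finite E"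
  shows "expected_alg E (fixed_set_alg p) w = (\<Sum>e\<in>E. w e * measure_pmf.prob p {I. e \<in> I})"
proof -
  have "map_pmf (\<lambda>\<sigma>. run (fixed_set_alg p) I \<sigma> w) (pmf_of_set (permutations_of_set E))
      = map_pmf (\<lambda>_. I \<inter> E) (pmf_of_set (permutations_of_set E))" for I
    using fE by (intro map_pmf_cong refl) (auto simp: run_fixed_set_alg dest: permutations_of_setD)
  then have "map_pmf (\<lambda>\<sigma>. run (fixed_set_alg p) I \<sigma> w) (pmf_of_set (permutations_of_set E))
      = return_pmf (I \<inter> E)" for I
    using fE by simp
  then have "expected_alg E (fixed_set_alg p) w = measure_pmf.expectation p (\<lambda>I. sum w (I \<inter> E))"
    by (simp add: expected_alg_def fixed_set_alg_def bind_return_pmf' map_pmf_def[symmetric])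
  also have "\<dots> = (\<Sum>e\<in>E. w e * measure_pmf.prob p {I. e \<in> I})"
    using expectation_sum_random_set[OF fE] .
  finally show ?thesis .
qed

lemma fixed_set_alg_competitive:
  assumes M: "matroid E indep" and LL: "loopless E indep" and p: "uniform_marginal_decomp E indep p"
  shows "competitive E indep (fixed_set_alg p) (matroid_density E indep)"
  unfolding competitive_def
proof (intro conjI allI impI)
  show "feasible_alg E indep (fixed_set_alg p)"
    using p matroid_indep_subset[OF M]
    unfolding feasible_alg_def uniform_marginal_decomp_def run_fixed_set_alg
    by (auto simp: fixed_set_alg_def)
next
  fix w :: "'a \<Rightarrow> real" assume nonneg: "\<forall>e\<in>E. 0 \<le> w e"
  show "opt_weight E indep w \<le> matroid_density E indep * expected_alg E (fixed_set_alg p) w"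
  proof (cases "E = {}")
    case True
    then show ?thesis using opt_weight_le_sum[OF M nonneg] by (simp add: expected_alg_fixed_set_alg)
  next
    case False
    have "matroid_density E indep * expected_alg E (fixed_set_alg p) w = sum w E"
      using p matroid_density_pos[OF M LL False]
      by (simp add: expected_alg_fixed_set_alg matroid_finite[OF M] uniform_marginal_decomp_def
          sum_distrib_left)
    then show ?thesis using opt_weight_le_sum[OF M nonneg] by simp
  qed
qed

subsection \<open>Parallel classes\<close>

lemma parallel_sym: "parallel E indep e f \<Longrightarrow> parallel E indep f e"
  unfolding parallel_def by (auto simp: insert_commute)

lemma parallel_dependent: "parallel E indep e f \<Longrightarrow> e \<noteq> f \<Longrightarrow> \<not> indep {e, f}"
  unfolding parallel_def circuit_def by auto

lemma parallel_in_carrier: "parallel E indep e f \<Longrightarrow> e \<noteq> f \<Longrightarrow> e \<in> E \<and> f \<in> E"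
  unfolding parallel_def circuit_def by auto

lemma parallel_trans:
  assumes M: "matroid E indep" and LL: "loopless E indep"
    and ef: "parallel E indep e f" and fg: "parallel E indep f g"
  shows "parallel E indep e g"
proof -
  consider "e = f" | "f = g" | "e = g" | "e \<noteq> f" "f \<noteq> g" "e \<noteq> g" by blast
  then show ?thesis
  proof cases
    case 4
    then have E: "e \<in> E" "f \<in> E" "g \<in> E"
      using parallel_in_carrier[OF ef] parallel_in_carrier[OF fg] by auto
    have "\<not> indep {e, g}"
    proof
      assume "indep {e, g}"
      moreover have "indep {f}" using LL E by (simp add: loopless_def)
      moreover have "card {f} < card {e, g}" using 4 by simp
      ultimately obtain x where x: "x \<in> {e, g} - {f}" "indep (insert x {f})"
        using matroid_augment[OF M] by blast
      have "\<not> indep {e, f}" "\<not> indep {g, f}"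
        using parallel_dependent[OF ef] parallel_dependent[OF fg] 4 by (auto simp: insert_commute)
      then show False using x by auto
    qed
    moreover have "{e, g} - {g} = {e}" "{e, g} - {e} = {g}" using 4 by auto
    ultimately have "circuit E indep {e, g}"
      using E LL unfolding circuit_def loopless_def by auto
    then show ?thesis unfolding parallel_def by simp
  qed (use ef fg in \<open>auto simp: parallel_def\<close>)
qed

lemma mem_parallel_class: "a \<in> E \<Longrightarrow> a \<in> parallel_class E indep a"
  unfolding parallel_class_def parallel_def by simp

lemma parallel_class_subset: "parallel_class E indep a \<subseteq> E"
  unfolding parallel_class_def by auto

lemma finite_parallel_class: "matroid E indep \<Longrightarrow> finite (parallel_class E indep a)"
  by (rule finite_subset[OF parallel_class_subset]) (rule matroid_finite)

lemma parallel_classes_disjoint: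
  assumes M: "matroid E indep" and LL: "loopless E indep" and I: "indep I" "a \<in> I" "b \<in> I"
    and x: "x \<in> parallel_class E indep a" "x \<in> parallel_class E indep b"
  shows "a = b"
proof (rule ccontr)
  assume "a \<noteq> b"
  have "parallel E indep a x" "parallel E indep b x"
    using x by (simp_all add: parallel_class_def)
  then have "parallel E indep a b" by (metis parallel_sym parallel_trans[OF M LL])
  moreover have "indep {a, b}" using matroid_indep_subset[OF M I(1)] I(2,3) by simp
  ultimately show False using parallel_dependent \<open>a \<noteq> b\<close> by metis
qed

lemma indep_exchange_parallel:
  assumes M: "matroid E indep" and LL: "loopless E indep" and T: "indep T" "a \<in> T"
    and ax: "parallel E indep a x" and xa: "x \<noteq> a" and xT: "x \<notin> T"
  shows "indep (insert x (T - {a}))"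
proof (rule ccontr)
  assume dep: "\<not> indep (insert x (T - {a}))"
  have fT: "finite T" using matroid_indep_finite[OF M T(1)] .
  have x: "indep {x}" using LL parallel_in_carrier[OF ax] xa by (simp add: loopless_def)
  have "card {x} \<le> card T" using T(2) fT by (auto simp: Suc_le_eq card_gt_0_iff)
  then obtain S where S: "{x} \<subseteq> S" "S \<subseteq> {x} \<union> T" "indep S" "card S = card T"
    using matroid_augment_to_card[OF M x T(1)] by blast
  have card_insert: "card (insert x T) = Suc (card T)" using fT xT by simp
  then have "S \<noteq> insert x T" using S(4) by auto
  then obtain y where y: "y \<in> insert x T" "y \<notin> S" using S(2) by blast
  have "y \<noteq> x" using S(1) y by blast
  have "S \<subseteq> insert x T - {y}" using S(2) y by blast
  moreover have "card (insert x T - {y}) = card S" using card_insert y S(4) fT by simp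
  ultimately have S_eq: "S = insert x T - {y}" using fT by (intro card_subset_eq) auto
  show False
  proof (cases "y = a")
    case True
    then have "S = insert x (T - {a})" using S_eq \<open>y \<noteq> x\<close> by blast
    then show False using dep S(3) by simp
  next
    case False
    then have "{a, x} \<subseteq> S" using S_eq T(2) \<open>y \<noteq> x\<close> by blast
    then show False using matroid_indep_subset[OF M S(3)] parallel_dependent[OF ax xa[symmetric]] by blast
  qed
qed

lemma indep_parallel_image:
  assumes M: "matroid E indep" and LL: "loopless E indep" and T: "indep T"
    and inj: "inj_on f X" and f: "\<forall>x\<in>X. f x \<in> T \<and> parallel E indep (f x) x"
  shows "indep X"
proof -
  have "finite X"
    using finite_imageD[OF finite_subset[OF _ matroid_indep_finite[OF M T]] inj] f by blast
  then have "indep (X \<union> (T - f ` X))" using T inj f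
  proof (induction X arbitrary: T rule: finite_induct)
    case empty
    then show ?case by simp
  next
    case (insert x X)
    have fx: "f x \<in> T" "parallel E indep (f x) x" using insert.prems(3) by auto
    have fx_X: "f x \<notin> f ` X" using insert.hyps(2) insert.prems(2) by auto
    show ?case
    proof (cases "f x = x")
      case True
      have "indep (X \<union> (T - f ` X))" using insert by (simp add: inj_on_insert)
      moreover have "X \<union> (T - f ` X) = insert x X \<union> (T - f ` insert x X)"
        using True fx(1) fx_X by auto
      ultimately show ?thesis by simp
    next
      case False
      have "x \<notin> T"
      proof
        assume "x \<in> T"
        then have "indep {f x, x}" using matroid_indep_subset[OF M insert.prems(1)] fx(1) by simp
        then show False using parallel_dependent[OF fx(2) False] by simp
      qed
      then have "indep (insert x (T - {f x}))"
        using indep_exchange_parallel[OF M LL insert.prems(1) fx not_sym[OF False]] by simp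
      moreover have "\<forall>y\<in>X. f y \<in> insert x (T - {f x}) \<and> parallel E indep (f y) y"
        using insert.prems(3) fx_X by (auto simp: image_iff)
      ultimately have "indep (X \<union> (insert x (T - {f x}) - f ` X))"
        using insert.IH insert.prems(2) by (simp add: inj_on_insert)
      moreover have "x \<notin> f ` X" using \<open>x \<notin> T\<close> insert.prems(3) by auto
      then have "X \<union> (insert x (T - {f x}) - f ` X) = insert x X \<union> (T - f ` insert x X)"
        by auto
      ultimately show ?thesis by simp
    qed
  qed
  then show ?thesis by (rule matroid_indep_subset[OF M]) blast
qed

lemma is_partition_parallel_classes:
  assumes M: "matroid E indep" and LL: "loopless E indep" and I: "indep I"
  shows "is_partition (parallel_class E indep ` I)"
  unfolding is_partition_def
proof (intro conjI ballI impI)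
  show "finite (parallel_class E indep ` I)" using matroid_indep_finite[OF M I] by simp
next
  fix B assume "B \<in> parallel_class E indep ` I"
  then obtain a where a: "a \<in> I" "B = parallel_class E indep a" by blast
  show "finite B" using a(2) finite_subset[OF parallel_class_subset matroid_finite[OF M]] by simp
  have "a \<in> E" using a(1) matroid_indep_carrier[OF M I] by blast
  then have "a \<in> B" using a(2) by (simp add: mem_parallel_class)
  then show "B \<noteq> {}" by blast
next
  fix B C assume "B \<in> parallel_class E indep ` I" "C \<in> parallel_class E indep ` I" "B \<noteq> C"
  then obtain a b where ab: "a \<in> I" "b \<in> I" "B = parallel_class E indep a" "C = parallel_class E indep b"
    and "a \<noteq> b" by blast
  show "B \<inter> C = {}"
  proof (rule ccontr)
    assume "B \<inter> C \<noteq> {}"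
    then obtain x where "x \<in> parallel_class E indep a" "x \<in> parallel_class E indep b"
      using ab(3,4) by blast
    then show False using parallel_classes_disjoint[OF M LL I ab(1,2)] \<open>a \<noteq> b\<close> by blast
  qed
qed

lemma indep_of_partition_indep_parallel_classes:
  assumes M: "matroid E indep" and LL: "loopless E indep" and I: "indep I"
    and X: "partition_indep (parallel_class E indep ` I) X"
  shows "indep X"
proof -
  define f where "f x = (SOME a. a \<in> I \<and> x \<in> parallel_class E indep a)" for x
  have f: "f x \<in> I \<and> x \<in> parallel_class E indep (f x)" if "x \<in> X" for x
    unfolding f_def by (rule someI_ex) (use X that in \<open>auto simp: partition_indep_def\<close>)
  have "inj_on f X"
  proof (rule inj_onI)
    fix x y assume xy: "x \<in> X" "y \<in> X" "f x = f y"
    have "card (X \<inter> parallel_class E indep (f x)) \<le> 1"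
      using X f[OF xy(1)] by (auto simp: partition_indep_def)
    moreover have "finite (X \<inter> parallel_class E indep (f x))"
      using finite_subset[OF parallel_class_subset matroid_finite[OF M]] by blast
    ultimately show "x = y" using f xy by (metis IntI card_le_Suc0_iff_eq One_nat_def)
  qed
  moreover have "\<forall>x\<in>X. f x \<in> I \<and> parallel E indep (f x) x"
    using f by (auto simp: parallel_class_def)
  ultimately show ?thesis by (rule indep_parallel_image[OF M LL I])
qed

lemma opt_weight_le_sum_class_max:
  assumes M: "matroid E indep" and LL: "loopless E indep" and S: "simplification_set E indep E'"
    and nonneg: "\<forall>e\<in>E. 0 \<le> w e"
  shows "opt_weight E indep w \<le> (\<Sum>a\<in>E'. Max (w ` parallel_class E indep a))"
proof -
  define m where "m a = Max (w ` parallel_class E indep a)" for a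
  define rep where "rep x = (THE a. a \<in> E' \<and> parallel E indep x a)" for x
  have E'E: "E' \<subseteq> E" using S by (simp add: simplification_set_def)
  have fE': "finite E'" using finite_subset[OF E'E matroid_finite[OF M]] .
  have rep: "rep x \<in> E' \<and> parallel E indep x (rep x)" if "x \<in> E" for x
    unfolding rep_def by (rule theI') (use S that in \<open>simp add: simplification_set_def\<close>)
  have w_le_m: "w x \<le> m (rep x)" if "x \<in> E" for x
  proof -
    have "parallel E indep x (rep x)" using rep[OF that] by simp
    then have "parallel E indep (rep x) x" by (rule parallel_sym)
    then have "x \<in> parallel_class E indep (rep x)" using that by (simp add: parallel_class_def)
    then show ?thesis unfolding m_def by (intro Max_ge finite_imageI finite_parallel_class[OF M]) simp
  qed
  have m_nonneg: "0 \<le> m a" if "a \<in> E'" for a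
  proof -
    have "a \<in> E" using that E'E by blast
    then have "w a \<le> m a" unfolding m_def
      by (intro Max_ge finite_imageI finite_parallel_class[OF M]) (simp add: mem_parallel_class)
    then show ?thesis using nonneg \<open>a \<in> E\<close> by force
  qed
  have "sum w I \<le> sum m E'" if I: "I \<subseteq> E" "indep I" for I
  proof -
    have "inj_on rep I"
    proof (rule inj_onI)
      fix x y assume xy: "x \<in> I" "y \<in> I" "rep x = rep y"
      have "x \<in> E" "y \<in> E" using I(1) xy(1,2) by auto
      then have xr: "parallel E indep x (rep x)" and yr: "parallel E indep y (rep x)"
        using rep[of x] rep[of y] xy(3) by simp_all
      have "parallel E indep x y" using xr parallel_sym[OF yr] by (rule parallel_trans[OF M LL])
      moreover have "indep {x, y}" using matroid_indep_subset[OF M I(2)] xy(1,2) by simp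
      ultimately show "x = y" using parallel_dependent[of E indep x y] by blast
    qed
    have "sum w I \<le> (\<Sum>x\<in>I. m (rep x))" using w_le_m I(1) by (intro sum_mono) auto
    also have "\<dots> = sum m (rep ` I)" using sum.reindex[OF \<open>inj_on rep I\<close>, of m] by simp
    also have "\<dots> \<le> sum m E'"
    proof (rule sum_mono2[OF fE'])
      show "rep ` I \<subseteq> E'" using rep I(1) by auto
    qed (use m_nonneg in blast)
    finally show ?thesis .
  qed
  then show ?thesis unfolding opt_weight_def m_def[symmetric]
  proof (intro Max.boundedI finite_opt_weight_values matroid_finite[OF M])
    show "{sum w I | I. I \<subseteq> E \<and> indep I} \<noteq> {}" using matroid_indep_empty[OF M] by blast
  qed blast
qed

lemma sum_class_max_le_opt_weight:
  assumes M: "matroid E indep" and LL: "loopless E indep" and I: "indep I"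
  shows "(\<Sum>a\<in>I. Max (w ` parallel_class E indep a))
    \<le> opt_weight (\<Union>(parallel_class E indep ` I)) (partition_indep (parallel_class E indep ` I)) w"
proof -
  define cl where "cl = parallel_class E indep"
  define best where "best a = (SOME x. x \<in> cl a \<and> w x = Max (w ` cl a))" for a
  have best: "best a \<in> cl a \<and> w (best a) = Max (w ` cl a)" if "a \<in> I" for a
  proof -
    have "a \<in> E" using matroid_indep_carrier[OF M I] that by blast
    then have "Max (w ` cl a) \<in> w ` cl a"
      unfolding cl_def by (intro Max_in finite_imageI finite_parallel_class[OF M]) (auto dest: mem_parallel_class)
    then have "\<exists>x. x \<in> cl a \<and> w x = Max (w ` cl a)" by force
    then show ?thesis unfolding best_def by (rule someI_ex)
  qed
  have best_cl: "best a \<in> cl b \<longleftrightarrow> a = b" if "a \<in> I" "b \<in> I" for a b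
    using best[OF that(1)] parallel_classes_disjoint[OF M LL I that(1,2), of "best a"]
    unfolding cl_def by blast
  have inj: "inj_on best I"
  proof (rule inj_onI)
    fix a b assume "a \<in> I" "b \<in> I" "best a = best b"
    then show "a = b" using best_cl[of a b] best[of b] by simp
  qed
  have "partition_indep (cl ` I) (best ` I)"
    unfolding partition_indep_def
  proof (intro conjI ballI)
    show "best ` I \<subseteq> \<Union>(cl ` I)" using best by blast
  next
    fix B assume "B \<in> cl ` I"
    then obtain b where b: "b \<in> I" "B = cl b" by blast
    then have "best ` I \<inter> B \<subseteq> {best b}" using best_cl by blast
    then show "card (best ` I \<inter> B) \<le> 1" using card_mono[of "{best b}"] by simp
  qed
  moreover have "finite (\<Union>(cl ` I))"
    using matroid_indep_finite[OF M I] finite_parallel_class[OF M] by (simp add: cl_def)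
  ultimately have "sum w (best ` I) \<le> opt_weight (\<Union>(cl ` I)) (partition_indep (cl ` I)) w"
    by (intro sum_le_opt_weight) (auto simp: partition_indep_def)
  moreover have "sum w (best ` I) = (\<Sum>a\<in>I. Max (w ` cl a))"
    using best by (simp add: sum.reindex[OF inj])
  ultimately show ?thesis unfolding cl_def by simp
qed

lemma matroid_restrict_indep:
  assumes M: "matroid E indep" and "E' \<subseteq> E"
  shows "matroid E' (restrict_indep indep E')"
  unfolding matroid_def restrict_indep_def
proof (intro conjI allI impI)
  show "finite E'" using assms matroid_finite finite_subset by blast
  show "indep {}" by (rule matroid_indep_empty[OF M])
next
  fix I J assume "(indep I \<and> I \<subseteq> E') \<and> (indep J \<and> J \<subseteq> E') \<and> card I < card J"
  then show "\<exists>x\<in>J - I. indep (insert x I) \<and> insert x I \<subseteq> E'"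
    using matroid_augment[OF M, of I J] by blast
qed (use matroid_indep_subset[OF M] in blast)+

lemma loopless_restrict_indep: "loopless E indep \<Longrightarrow> E' \<subseteq> E \<Longrightarrow> loopless E' (restrict_indep indep E')"
  unfolding loopless_def restrict_indep_def by blast

subsection \<open>The composite algorithm\<close>

lemma set_nth_Cons_conv:
  "{(x # l) ! i | i. i < length (x # l) \<and> P (take i (x # l)) ((x # l) ! i)} =
     (if P [] x then {x} else {}) \<union> {l ! i | i. i < length l \<and> P (x # take i l) (l ! i)}"
proof (intro equalityI subsetI)
  fix y assume "y \<in> {(x # l) ! i | i. i < length (x # l) \<and> P (take i (x # l)) ((x # l) ! i)}"
  then obtain i where i: "y = (x # l) ! i" "i < length (x # l)" "P (take i (x # l)) ((x # l) ! i)"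
    by blast
  then show "y \<in> (if P [] x then {x} else {}) \<union> {l ! i | i. i < length l \<and> P (x # take i l) (l ! i)}"
    by (cases i) auto
next
  fix y assume y: "y \<in> (if P [] x then {x} else {}) \<union> {l ! i | i. i < length l \<and> P (x # take i l) (l ! i)}"
  show "y \<in> {(x # l) ! i | i. i < length (x # l) \<and> P (take i (x # l)) ((x # l) ! i)}"
  proof (cases "y \<in> {l ! i | i. i < length l \<and> P (x # take i l) (l ! i)}")
    case True
    then obtain i where "y = l ! i" "i < length l" "P (x # take i l) (l ! i)" by blast
    then show ?thesis by (intro CollectI exI[of _ "Suc i"]) simp
  next
    case False
    then have "y = x" "P [] x" using y by (auto split: if_splits)
    then show ?thesis by (intro CollectI exI[of _ 0]) simp
  qed
qed

lemma set_nth_filter_conv: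
  "{\<sigma> ! i | i. i < length \<sigma> \<and> Q (\<sigma> ! i) \<and> g (filter Q (take i \<sigma>)) (\<sigma> ! i)} =
   {filter Q \<sigma> ! j | j. j < length (filter Q \<sigma>) \<and> g (take j (filter Q \<sigma>)) (filter Q \<sigma> ! j)}"
proof (induction \<sigma> arbitrary: g)
  case (Cons x \<sigma>)
  define g' where "g' l = g (if Q x then x # l else l)" for l
  have "{(x # \<sigma>) ! i | i. i < length (x # \<sigma>) \<and> Q ((x # \<sigma>) ! i) \<and> g (filter Q (take i (x # \<sigma>))) ((x # \<sigma>) ! i)}
     = (if Q x \<and> g [] x then {x} else {})
       \<union> {\<sigma> ! i | i. i < length \<sigma> \<and> Q (\<sigma> ! i) \<and> g' (filter Q (take i \<sigma>)) (\<sigma> ! i)}"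
    using set_nth_Cons_conv[of x \<sigma> "\<lambda>pre e. Q e \<and> g (filter Q pre) e"] by (simp add: g'_def)
  also have "\<dots> = (if Q x \<and> g [] x then {x} else {})
       \<union> {filter Q \<sigma> ! j | j. j < length (filter Q \<sigma>) \<and> g' (take j (filter Q \<sigma>)) (filter Q \<sigma> ! j)}"
    by (simp only: Cons.IH)
  also have "\<dots> = {filter Q (x # \<sigma>) ! j | j. j < length (filter Q (x # \<sigma>))
      \<and> g (take j (filter Q (x # \<sigma>))) (filter Q (x # \<sigma>) ! j)}"
    using set_nth_Cons_conv[of x "filter Q \<sigma>" g] by (simp add: g'_def)
  finally show ?case .
qed simp

lemma run_composite_alg:
  "run (composite_alg E indep p' \<A>) (I', r) \<sigma> w =
   run (\<A> (parallel_class E indep ` I')) r (filter (\<lambda>x. x \<in> \<Union>(parallel_class E indep ` I')) \<sigma>) w"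
proof -
  define U where "U = \<Union>(parallel_class E indep ` I')"
  define g where "g l e = snd (\<A> (parallel_class E indep ` I')) r (map (\<lambda>x. (x, w x)) l) e (w e)" for l e
  have "filter (\<lambda>xw. fst xw \<in> U) (map (\<lambda>x. (x, w x)) l) = map (\<lambda>x. (x, w x)) (filter (\<lambda>x. x \<in> U) l)"
    for l by (simp add: filter_map o_def)
  then have "run (composite_alg E indep p' \<A>) (I', r) \<sigma> w =
     {\<sigma> ! i | i. i < length \<sigma> \<and> \<sigma> ! i \<in> U \<and> g (filter (\<lambda>x. x \<in> U) (take i \<sigma>)) (\<sigma> ! i)}"
    unfolding run_def composite_alg_def g_def U_def by (simp add: Let_def)
  also have "\<dots> = run (\<A> (parallel_class E indep ` I')) r (filter (\<lambda>x. x \<in> U) \<sigma>) w"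
    using set_nth_filter_conv[of \<sigma> "\<lambda>x. x \<in> U" g] unfolding run_def g_def by simp
  finally show ?thesis unfolding U_def .
qed

lemma filter_in_permutations_of_set:
  "\<sigma> \<in> permutations_of_set E \<Longrightarrow> filter (\<lambda>x. x \<in> U) \<sigma> \<in> permutations_of_set (E \<inter> U)"
  by (auto simp: permutations_of_set_def)

lemma map_pmf_filter_permutations_of_set:
  assumes "finite A"
  shows "map_pmf (filter Q) (pmf_of_set (permutations_of_set A)) = pmf_of_set (permutations_of_set {x\<in>A. Q x})"
proof -
  have "map_pmf (filter Q) (pmf_of_set (permutations_of_set A)) =
        map_pmf fst (map_pmf (partition Q) (pmf_of_set (permutations_of_set A)))"
    by (simp add: map_pmf_comp)
  also have "\<dots> = pmf_of_set (permutations_of_set {x\<in>A. Q x})"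
    using partition_random_permutations[OF assms, of Q] by (simp add: map_fst_pair_pmf)
  finally show ?thesis .
qed

lemma outcome_pmf_composite_alg:
  assumes fE: "finite E"
  shows "outcome_pmf E (composite_alg E indep p' \<A>) w =
    p' \<bind> (\<lambda>I'. outcome_pmf (\<Union>(parallel_class E indep ` I')) (\<A> (parallel_class E indep ` I')) w)"
proof -
  define P where "P I' = parallel_class E indep ` I'" for I'
  define C where "C = composite_alg E indep p' \<A>"
  define perms where "perms A = pmf_of_set (permutations_of_set A)" for A :: "'a set"
  have U: "{x\<in>E. x \<in> \<Union>(P I')} = \<Union>(P I')" for I'
    using parallel_class_subset[of E indep] unfolding P_def by blast
  have filter_perms: "map_pmf (\<lambda>\<sigma>. run (\<A> (P I')) r (filter (\<lambda>x. x \<in> \<Union>(P I')) \<sigma>) w) (perms E)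
      = map_pmf (\<lambda>\<tau>. run (\<A> (P I')) r \<tau> w) (perms (\<Union>(P I')))" for I' r
  proof -
    have "map_pmf (\<lambda>\<sigma>. run (\<A> (P I')) r (filter (\<lambda>x. x \<in> \<Union>(P I')) \<sigma>) w) (perms E)
        = map_pmf (\<lambda>\<tau>. run (\<A> (P I')) r \<tau> w) (map_pmf (filter (\<lambda>x. x \<in> \<Union>(P I'))) (perms E))"
      by (simp add: map_pmf_comp)
    then show ?thesis unfolding perms_def map_pmf_filter_permutations_of_set[OF fE] U .
  qed
  have "fst C = p' \<bind> (\<lambda>I'. map_pmf (Pair I') (fst (\<A> (P I'))))"
    by (simp add: C_def composite_alg_def P_def)
  then have "outcome_pmf E C w
      = p' \<bind> (\<lambda>I'. fst (\<A> (P I')) \<bind> (\<lambda>r. map_pmf (\<lambda>\<sigma>. run C (I', r) \<sigma> w) (perms E)))"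
    by (simp add: outcome_pmf_def perms_def bind_assoc_pmf bind_map_pmf)
  also have "\<dots> = p' \<bind> (\<lambda>I'. fst (\<A> (P I')) \<bind>
      (\<lambda>r. map_pmf (\<lambda>\<sigma>. run (\<A> (P I')) r (filter (\<lambda>x. x \<in> \<Union>(P I')) \<sigma>) w) (perms E)))"
    unfolding C_def run_composite_alg P_def ..
  also have "\<dots> = p' \<bind> (\<lambda>I'. outcome_pmf (\<Union>(P I')) (\<A> (P I')) w)"
    unfolding filter_perms unfolding outcome_pmf_def perms_def ..
  finally show ?thesis unfolding C_def P_def .
qed

lemma expected_alg_composite_alg:
  fixes \<A> :: "'a set set \<Rightarrow> ('a, 'r) online_alg" and w :: "'a \<Rightarrow> real"
  assumes fE: "finite E"
  shows "expected_alg E (composite_alg E indep p' \<A>) w = measure_pmf.expectation p'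
    (\<lambda>I'. expected_alg (\<Union>(parallel_class E indep ` I')) (\<A> (parallel_class E indep ` I')) w)"
proof -
  define U where "U I' = \<Union>(parallel_class E indep ` I')" for I'
  define R where "R I' = outcome_pmf (U I') (\<A> (parallel_class E indep ` I')) w" for I'
  have UE: "U I' \<subseteq> E" for I' using parallel_class_subset[of E indep] unfolding U_def by blast
  have fU: "finite (U I')" for I' using finite_subset[OF UE fE] .
  \<comment> \<open>outcomes are subsets of \<open>E\<close>; intersecting with \<open>E\<close> makes the integrand bounded\<close>
  define h where "h S = sum w (S \<inter> E)" for S
  have h_bounded: "\<bar>h S\<bar> \<le> (\<Sum>e\<in>E. \<bar>w e\<bar>)" for S
    unfolding h_def using fE by (intro order_trans[OF sum_abs] sum_mono2) auto
  have h_eq: "h S = sum w S" if "S \<subseteq> E" for S using that by (simp add: h_def Int_absorb2)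
  have "expected_alg E (composite_alg E indep p' \<A>) w
      = measure_pmf.expectation (outcome_pmf E (composite_alg E indep p' \<A>) w) h"
    unfolding expected_alg_outcome_pmf
    by (intro expectation_cong_pmf h_eq[symmetric] set_pmf_outcome_pmf_subset[OF fE])
  also have "\<dots> = measure_pmf.expectation p' (\<lambda>I'. measure_pmf.expectation (R I') h)"
    unfolding outcome_pmf_composite_alg[OF fE] R_def U_def
    by (rule expectation_bind_pmf_bounded[OF h_bounded])
  also have "\<dots> = measure_pmf.expectation p' (\<lambda>I'. measure_pmf.expectation (R I') (sum w))"
  proof -
    have "measure_pmf.expectation (R I') h = measure_pmf.expectation (R I') (sum w)" for I'
    proof (rule expectation_cong_pmf)
      fix S assume "S \<in> set_pmf (R I')"
      then have "S \<subseteq> E" using set_pmf_outcome_pmf_subset[OF fU] UE unfolding R_def by blast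
      then show "h S = sum w S" by (rule h_eq)
    qed
    then show ?thesis by simp
  qed
  finally show ?thesis unfolding R_def U_def expected_alg_outcome_pmf .
qed

lemma composite_alg_feasible:
  assumes M: "matroid E indep" and LL: "loopless E indep"
    and indep: "\<forall>I'\<in>set_pmf p'. indep I'"
    and feasible: "\<forall>I'\<in>set_pmf p'. feasible_alg (\<Union>(parallel_class E indep ` I'))
      (partition_indep (parallel_class E indep ` I')) (\<A> (parallel_class E indep ` I'))"
  shows "feasible_alg E indep (composite_alg E indep p' \<A>)"
  unfolding feasible_alg_def
proof (intro ballI allI impI)
  fix s \<sigma> and w :: "'a \<Rightarrow> real"
  assume s: "s \<in> set_pmf (fst (composite_alg E indep p' \<A>))" and \<sigma>: "\<sigma> \<in> permutations_of_set E"
    and nonneg: "\<forall>e\<in>E. 0 \<le> w e"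
  define P where "P I' = parallel_class E indep ` I'" for I'
  obtain I' r where Ir: "s = (I', r)" "I' \<in> set_pmf p'" "r \<in> set_pmf (fst (\<A> (P I')))"
    using s by (auto simp: composite_alg_def P_def)
  have UE: "\<Union>(P I') \<subseteq> E" using parallel_class_subset[of E indep] unfolding P_def by blast
  have perm: "filter (\<lambda>x. x \<in> \<Union>(P I')) \<sigma> \<in> permutations_of_set (\<Union>(P I'))"
    using filter_in_permutations_of_set[OF \<sigma>, of "\<Union>(P I')"] UE by (simp add: Int_absorb1)
  have feasible_I': "feasible_alg (\<Union>(P I')) (partition_indep (P I')) (\<A> (P I'))"
    using feasible Ir(2) unfolding P_def by blast
  have "\<forall>e\<in>\<Union>(P I'). 0 \<le> w e" using nonneg UE by blast
  from feasible_algD[OF feasible_I' Ir(3) perm this]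
  have "partition_indep (P I') (run (\<A> (P I')) r (filter (\<lambda>x. x \<in> \<Union>(P I')) \<sigma>) w)" .
  then have "indep (run (\<A> (P I')) r (filter (\<lambda>x. x \<in> \<Union>(P I')) \<sigma>) w)"
    using indep_of_partition_indep_parallel_classes[OF M LL] indep Ir(2) unfolding P_def by blast
  then show "indep (run (composite_alg E indep p' \<A>) s \<sigma> w)"
    unfolding Ir(1) run_composite_alg P_def .
qed

lemma composite_alg_competitive:
  fixes \<A> :: "'a set set \<Rightarrow> ('a, 'r) online_alg"
  assumes M: "matroid E indep" and LL: "loopless E indep" and S: "simplification_set E indep E'"
    and \<A>: "\<forall>P. is_partition P \<longrightarrow> competitive (\<Union>P) (partition_indep P) (\<A> P) (exp 1)"
    and p': "uniform_marginal_decomp E' (restrict_indep indep E') p'"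
  shows "competitive E indep (composite_alg E indep p' \<A>) (exp 1 * matroid_density E' (restrict_indep indep E'))"
proof -
  define P where "P I' = parallel_class E indep ` I'" for I'
  define C where "C = composite_alg E indep p' \<A>"
  define \<gamma> where "\<gamma> = matroid_density E' (restrict_indep indep E')"
  have E'E: "E' \<subseteq> E" using S by (simp add: simplification_set_def)
  have fE': "finite E'" using finite_subset[OF E'E matroid_finite[OF M]] .
  have p'_indep: "indep I' \<and> I' \<subseteq> E'" if "I' \<in> set_pmf p'" for I'
    using p' that by (simp add: uniform_marginal_decomp_def restrict_indep_def)
  have \<A>_comp: "competitive (\<Union>(P I')) (partition_indep (P I')) (\<A> (P I')) (exp 1)"
    if "I' \<in> set_pmf p'" for I'
    using \<A> is_partition_parallel_classes[OF M LL] p'_indep[OF that] unfolding P_def by blast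
  have "feasible_alg E indep C"
    unfolding C_def
  proof (rule composite_alg_feasible[OF M LL])
    show "\<forall>I'\<in>set_pmf p'. indep I'" using p'_indep by blast
    show "\<forall>I'\<in>set_pmf p'. feasible_alg (\<Union>(parallel_class E indep ` I'))
      (partition_indep (parallel_class E indep ` I')) (\<A> (parallel_class E indep ` I'))"
      using \<A>_comp unfolding competitive_def P_def by blast
  qed
  moreover have "opt_weight E indep w \<le> exp 1 * \<gamma> * expected_alg E C w"
    if nonneg: "\<forall>e\<in>E. 0 \<le> w e" for w
  proof (cases "E = {}")
    case True
    then show ?thesis using opt_weight_le_sum[OF M nonneg] by (simp add: expected_alg_empty)
  next
    case False
    then obtain e where "e \<in> E" by blast
    then have "E' \<noteq> {}" using S unfolding simplification_set_def by blast
    then have \<gamma>: "0 < \<gamma>" unfolding \<gamma>_def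
      by (rule matroid_density_pos[OF matroid_restrict_indep[OF M E'E] loopless_restrict_indep[OF LL E'E]])
    define m where "m a = Max (w ` parallel_class E indep a)" for a
    have "measure_pmf.expectation p' (sum m) = measure_pmf.expectation p' (\<lambda>I'. sum m (I' \<inter> E'))"
    proof (rule expectation_cong_pmf)
      fix I' assume "I' \<in> set_pmf p'"
      then show "sum m I' = sum m (I' \<inter> E')" using p'_indep by (simp add: Int_absorb2)
    qed
    also have "\<dots> = (\<Sum>a\<in>E'. m a * (1 / \<gamma>))"
      using p' by (simp add: expectation_sum_random_set[OF fE'] uniform_marginal_decomp_def \<gamma>_def)
    finally have expectation_m: "\<gamma> * measure_pmf.expectation p' (sum m) = sum m E'"
      using \<gamma> by (simp add: sum_distrib_left)
    have "measure_pmf.expectation p' (sum m)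
        \<le> measure_pmf.expectation p' (\<lambda>I'. exp 1 * expected_alg (\<Union>(P I')) (\<A> (P I')) w)"
    proof (rule expectation_mono_pmf)
      have "set_pmf p' \<subseteq> Pow E'" using p'_indep by blast
      then show "finite (set_pmf p')" using finite_subset fE' by blast
    next
      fix I' assume I': "I' \<in> set_pmf p'"
      have "sum m I' \<le> opt_weight (\<Union>(P I')) (partition_indep (P I')) w"
        unfolding m_def P_def using p'_indep[OF I'] sum_class_max_le_opt_weight[OF M LL] by blast
      also have "\<dots> \<le> exp 1 * expected_alg (\<Union>(P I')) (\<A> (P I')) w"
        using competitiveD[OF \<A>_comp[OF I']] nonneg parallel_class_subset[of E indep]
        unfolding P_def by blast
      finally show "sum m I' \<le> exp 1 * expected_alg (\<Union>(P I')) (\<A> (P I')) w" .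
    qed
    also have "\<dots> = exp 1 * expected_alg E C w"
      unfolding C_def expected_alg_composite_alg[OF matroid_finite[OF M]] P_def by simp
    finally have "sum m E' \<le> \<gamma> * (exp 1 * expected_alg E C w)"
      using \<gamma> expectation_m by (metis mult_left_mono less_imp_le)
    moreover have "opt_weight E indep w \<le> sum m E'"
      unfolding m_def by (rule opt_weight_le_sum_class_max[OF M LL S nonneg])
    ultimately show ?thesis by (simp add: algebra_simps)
  qed
  ultimately show ?thesis unfolding competitive_def C_def \<gamma>_def by blast
qed

theorem theorem9:
  fixes E :: "'a set" and indep :: "'a set \<Rightarrow> bool"
  assumes M: "matroid E indep" and LL: "loopless E indep"
  shows "((\<exists>p. uniform_marginal_decomp E indep p) \<and>
          (\<forall>p. uniform_marginal_decomp E indep p \<longrightarrow>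
              competitive E indep (fixed_set_alg p) (matroid_density E indep)))
       \<and> (\<forall>(E' :: 'a set) (\<A> :: 'a set set \<Rightarrow> ('a, 'r) online_alg) (p' :: 'a set pmf).
          simplification_set E indep E' \<longrightarrow>
          (\<forall>P. is_partition P \<longrightarrow> competitive (\<Union>P) (partition_indep P) (\<A> P) (exp 1)) \<longrightarrow>
          uniform_marginal_decomp E' (restrict_indep indep E') p' \<longrightarrow>
          competitive E indep (composite_alg E indep p' \<A>)
            (exp 1 * matroid_density E' (restrict_indep indep E')))"
proof (intro conjI allI impI)
  show "\<exists>p. uniform_marginal_decomp E indep p" by (rule uniform_marginal_decomp_exists[OF M LL])
next
  fix p assume "uniform_marginal_decomp E indep p"
  then show "competitive E indep (fixed_set_alg p) (matroid_density E indep)"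
    by (rule fixed_set_alg_competitive[OF M LL])
next
  fix E' :: "'a set" and \<A> :: "'a set set \<Rightarrow> ('a, 'r) online_alg" and p' :: "'a set pmf"
  assume "simplification_set E indep E'"
    and "\<forall>P. is_partition P \<longrightarrow> competitive (\<Union>P) (partition_indep P) (\<A> P) (exp 1)"
    and "uniform_marginal_decomp E' (restrict_indep indep E') p'"
  then show "competitive E indep (composite_alg E indep p' \<A>)
      (exp 1 * matroid_density E' (restrict_indep indep E'))"
    by (rule composite_alg_competitive[OF M LL])
qed

end
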